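(* Let $\mathcal{L}^{\mu}\in\mathbb{C}^{p\times t}$ be nonzero with $\|\mathcal{L}^{\mu}\|_{\max}<1$, let $N\in\mathbb{N}$ and $\alpha>0$, and set $\beta_k=\beta_k(N)=\min\{(1.5)^k,(1.5)^N\}\cdot\frac{1.25}{\|\mathcal{L}^{\mu}\|_2}$. Consider the iteration $\mathcal{N}^0=0$, $Z^0=\mathcal{L}^{\mu}/\|\mathcal{L}^{\mu}\|_2$ and, for $k\ge0$, $$\mathcal{A}^{k+1}=M^k-\hat P_{\alpha/\beta_k}(M^k),\quad M^k=\tfrac1{\beta_k}Z^k-\mathcal{N}^k+\mathcal{L}^{\mu},$$ $$\mathcal{N}^{k+1}=U\,\mathrm{diag}\big(\max\{\sigma_i-\tfrac1{\beta_k},0\}\big)V^*\ \text{ where } \mathcal{L}^{\mu}-\mathcal{A}^{k+1}+\tfrac1{\beta_k}Z^k=U\,\mathrm{diag}(\sigma_i)V^*\ \text{(SVD)},$$ $$Z^{k+1}=Z^k-\beta_k(\mathcal{N}^{k+1}+\mathcal{A}^{k+1}-\mathcal{L}^{\mu}).$$ Suppose there are constants $p>0$ and $q\in(0,1)$ such that $\|\mathcal{L}^{\mu}-\mathcal{N}^r-\mathcal{A}^r\|_{\max}\le pq^r$ for all $r\ge1$. If $$\alpha>c(\mathcal{L}^{\mu}):=\frac{\|\mathcal{L}^{\mu}\|_{\max}}{\|\mathcal{L}^{\mu}\|_2}+\frac{1.25p}{\|\mathcal{L}^{\mu}\|_2}\cdot\frac{1-(1.5)^Nq^N}{1-1.5q}+\frac{\beta_N(N)\,p\,q^N}{1-q},$$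 then $\|\mathcal{A}^k\|_{\max}<1$ for all $k\in\mathbb{N}$ (so the deformations reconstructed from the columns of $\mathcal{A}^k$ are bijective).
   Context: $\|A\|_{\max}=\max_{i,j}|a_{ij}|$; $\|A\|_2$ is the spectral norm (largest singular value); $V^*$ is the conjugate transpose; $\hat P_{r}$ acts entrywise as the Euclidean projection of $\mathbb{C}$ onto the closed disk $\{z:|z|\le r\}$. This iteration is the ADMM scheme for $\min\|\mathcal{N}\|_*+\alpha\|\mathcal{A}\|_1$ subject to $\mathcal{N}+\mathcal{A}=\mathcal{L}^{\mu}$, where $\|\mathcal{A}\|_1=\sum_{i,j}|a_{ij}|$. *)

theory Defs
  imports "HOL-Analysis.Analysis"
begin

text \<open>Complex p x t matrices are represented as complex^'t^'p (rows indexed by 'p).\<close>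

definition max_norm :: "complex^'t^'p \<Rightarrow> real" where
  "max_norm A = Max (range (\<lambda>(i,j). cmod (A $ i $ j)))"

definition spec_norm :: "complex^'t^'p \<Rightarrow> real" where
  "spec_norm A = onorm (\<lambda>x. A *v x)"

definition disk_proj :: "real \<Rightarrow> complex \<Rightarrow> complex" where
  "disk_proj r z = (if cmod z \<le> r then z else complex_of_real (r / cmod z) * z)"

definition disk_proj_mat :: "real \<Rightarrow> complex^'t^'p \<Rightarrow> complex^'t^'p" where
  "disk_proj_mat r A = (\<chi> i j. disk_proj r (A $ i $ j))"

definition cinner :: "complex^'n \<Rightarrow> complex^'n \<Rightarrow> complex" where
  "cinner x y = (\<Sum>i\<in>UNIV. x $ i * cnj (y $ i))"

definition orthonormal_fam :: "nat \<Rightarrow> (nat \<Rightarrow> complex^'n) \<Rightarrow> bool" where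
  "orthonormal_fam r u \<longleftrightarrow> (\<forall>i<r. \<forall>j<r. cinner (u i) (u j) = (if i = j then 1 else 0))"

definition outer :: "complex^'p \<Rightarrow> complex^'t \<Rightarrow> complex^'t^'p" where
  "outer u v = (\<chi> a b. u $ a * cnj (v $ b))"

text \<open>Y is the singular value thresholding of X at level tau, computed from an SVD
  X = U diag(sigma_i) V^* (written as sum of sigma_i u_i v_i^* over i < min(p,t), with
  orthonormal columns u_i of U and v_i of V):  Y = U diag(max(sigma_i - tau, 0)) V^*.\<close>
definition svt_of :: "real \<Rightarrow> complex^'t^'p \<Rightarrow> complex^'t^'p \<Rightarrow> bool" where
  "svt_of tau X Y \<longleftrightarrow>
     (\<exists>(u :: nat \<Rightarrow> complex^'p) (v :: nat \<Rightarrow> complex^'t) (\<sigma> :: nat \<Rightarrow> real).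
        let r = min CARD('p) CARD('t) in
        orthonormal_fam r u \<and> orthonormal_fam r v \<and> (\<forall>i<r. \<sigma> i \<ge> 0) \<and>
        X = (\<Sum>i<r. \<sigma> i *\<^sub>R outer (u i) (v i)) \<and>
        Y = (\<Sum>i<r. max (\<sigma> i - tau) 0 *\<^sub>R outer (u i) (v i)))"

end

theory Submission
  imports Defs
begin

text \<open>Entrywise, \<open>m - P\<^sub>r(m)\<close> has modulus \<open>max(|m| - r, 0)\<close>, so the new sparse
  iterate has entries below 1 as soon as the entries of \<open>M\<^sup>k = (L - N\<^sup>k) + Z\<^sup>k/\<beta>\<^sub>k\<close> are
  below \<open>1 + \<alpha>/\<beta>\<^sub>k\<close>. Inductively \<open>L - N\<^sup>k\<close> is the old sparse iterate plus a residual, hence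
  has entries below \<open>1 + p q\<^sup>k\<close>; and every dual update adds \<open>\<beta>\<^sub>j\<close> times a residual, so the
  entries of \<open>Z\<^sup>k\<close> stay below \<open>\<parallel>Z\<^sup>0\<parallel>\<^sub>m\<^sub>a\<^sub>x\<close> plus a partial sum of \<open>\<Sum> \<beta>\<^sub>j p q\<^sup>j\<close>. The
  hypothesis on \<open>\<alpha>\<close> bounds this series, whose weights \<open>min(1.5\<^sup>j, 1.5\<^sup>N)\<close> make it
  geometric with ratio \<open>1.5 q\<close> up to \<open>N\<close> and with ratio \<open>q\<close> after it.\<close>

lemma max_norm_le_iff: "max_norm (A :: complex^'t^'p) \<le> c \<longleftrightarrow> (\<forall>i j. cmod (A $ i $ j) \<le> c)"
  unfolding max_norm_def by (subst Max_le_iff) auto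

lemma max_norm_less_iff: "max_norm (A :: complex^'t^'p) < c \<longleftrightarrow> (\<forall>i j. cmod (A $ i $ j) < c)"
  unfolding max_norm_def by (subst Max_less_iff) auto

lemma norm_entry_le_max_norm: "cmod (A $ i $ j) \<le> max_norm (A :: complex^'t^'p)"
  using max_norm_le_iff by blast

lemma scaleR_matrix_entry: "(c *\<^sub>R (A :: complex^'t^'p)) $ i $ j = complex_of_real c * A $ i $ j"
  by (simp only: vector_scaleR_component) (simp add: scaleR_conv_of_real)

lemma max_norm_scaleR_le: "max_norm (c *\<^sub>R A) \<le> \<bar>c\<bar> * max_norm (A :: complex^'t^'p)"
  unfolding max_norm_le_iff
  by (simp add: scaleR_matrix_entry norm_mult mult_left_mono norm_entry_le_max_norm)

lemma spec_norm_pos: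
  assumes "(L :: complex^'t^'p) \<noteq> 0"
  shows "spec_norm L > 0"
proof -
  obtain i j where ij: "L $ i $ j \<noteq> 0"
    using assms by (auto simp: vec_eq_iff)
  have "(L *v axis j 1) $ i = L $ i $ j"
    by (simp add: matrix_vector_mult_def axis_def if_distrib cong: if_cong)
  then have "L *v axis j 1 \<noteq> 0"
    using ij by auto
  then show ?thesis
    unfolding spec_norm_def by (subst onorm_pos_lt) (auto simp: matrix_vector_mul_bounded_linear)
qed

lemma norm_diff_disk_proj_le: "cmod (m - disk_proj r m) \<le> max (cmod m - r) 0"
proof (cases "cmod m \<le> r \<or> m = 0")
  case True
  then show ?thesis by (auto simp: disk_proj_def)
next
  case False
  then have "m - disk_proj r m = complex_of_real (1 - r / cmod m) * m"
    by (simp add: disk_proj_def algebra_simps)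
  then have "cmod (m - disk_proj r m) = \<bar>1 - r / cmod m\<bar> * cmod m"
    by (simp only: norm_mult norm_of_real)
  also have "\<dots> = cmod m - r"
    using False by (simp add: field_simps)
  finally show ?thesis
    by simp
qed

lemma norm_shrinkage_residual_lt_1:
  fixes x z :: complex
  assumes "\<beta> > 0" and "cmod x < 1 + \<epsilon>" and "cmod z \<le> \<zeta>" and "\<zeta> + \<beta> * \<epsilon> \<le> \<alpha>"
  shows "cmod ((complex_of_real (1 / \<beta>) * z + x) - disk_proj (\<alpha> / \<beta>) (complex_of_real (1 / \<beta>) * z + x)) < 1"
proof -
  let ?m = "complex_of_real (1 / \<beta>) * z + x"
  have "cmod ?m \<le> cmod z / \<beta> + cmod x"
    using assms(1) norm_triangle_ineq[of "complex_of_real (1 / \<beta>) * z" x] by (simp add: norm_divide)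
  also have "\<dots> < \<zeta> / \<beta> + 1 + \<epsilon>"
    using assms(2) divide_right_mono[OF assms(3), of \<beta>] assms(1) by simp
  also have "\<dots> = (\<zeta> + \<beta> * \<epsilon>) / \<beta> + 1"
    using assms(1) by (simp add: field_simps)
  also have "\<dots> \<le> \<alpha> / \<beta> + 1"
    using assms(1,4) by (simp add: divide_right_mono)
  finally show ?thesis
    using norm_diff_disk_proj_le[of ?m "\<alpha> / \<beta>"] by linarith
qed

lemma sum_geometric_le:
  fixes q :: real
  assumes "0 \<le> q" and "q < 1"
  shows "(\<Sum>j<n. q ^ j) \<le> 1 / (1 - q)"
  using assms by (simp add: sum_gp_strict divide_right_mono)

lemma sum_capped_geometric_le:
  fixes c q :: real
  assumes c: "1 \<le> c" and q: "0 \<le> q" "q < 1"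
  shows "(\<Sum>j<n. min (c ^ j) (c ^ N) * q ^ j) \<le> (\<Sum>j<N. (c * q) ^ j) + c ^ N * q ^ N / (1 - q)"
proof -
  let ?g = "\<lambda>j. min (c ^ j) (c ^ N) * q ^ j"
  have "(\<Sum>j<n. ?g j) \<le> (\<Sum>j<N + n. ?g j)"
    using c q by (intro sum_mono2) auto
  also have "\<dots> = (\<Sum>j<N. ?g j) + (\<Sum>j<n. ?g (j + N))"
    by (induction n) (simp_all add: add.commute)
  also have "(\<Sum>j<N. ?g j) = (\<Sum>j<N. (c * q) ^ j)"
    using c by (intro sum.cong) (auto simp: power_increasing min_absorb1 power_mult_distrib)
  also have "(\<Sum>j<n. ?g (j + N)) = c ^ N * q ^ N * (\<Sum>j<n. q ^ j)"
    using c by (simp add: power_increasing min_absorb2 power_add sum_distrib_left mult_ac)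
  also have "\<dots> \<le> c ^ N * q ^ N * (1 / (1 - q))"
    using c q by (intro mult_left_mono sum_geometric_le) auto
  finally show ?thesis by simp
qed

lemma admm_dual_entry_bound:
  fixes L :: "complex^'t^'p" and Nm A Z :: "nat \<Rightarrow> complex^'t^'p" and \<beta> \<rho> :: "nat \<Rightarrow> real"
  assumes beta_pos: "\<And>k. \<beta> k > 0"
    and Z_step: "\<And>k. Z (Suc k) = Z k - \<beta> k *\<^sub>R (Nm (Suc k) + A (Suc k) - L)"
    and residual: "\<And>r. r \<ge> 1 \<Longrightarrow> max_norm (L - Nm r - A r) \<le> \<rho> r"
  shows "cmod (Z k $ i $ j) \<le> max_norm (Z 0) + (\<Sum>l<k. \<beta> l * \<rho> (Suc l))"
proof (induction k)
  case 0
  show ?case by (simp add: norm_entry_le_max_norm)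
next
  case (Suc k)
  let ?e = "(L - Nm (Suc k) - A (Suc k)) $ i $ j"
  have "Z (Suc k) = Z k + \<beta> k *\<^sub>R (L - Nm (Suc k) - A (Suc k))"
    by (simp add: Z_step algebra_simps)
  then have "Z (Suc k) $ i $ j = Z k $ i $ j + complex_of_real (\<beta> k) * ?e"
    by (simp only: vector_add_component scaleR_matrix_entry)
  then have "cmod (Z (Suc k) $ i $ j) \<le> cmod (Z k $ i $ j) + \<beta> k * cmod ?e"
    using beta_pos[of k] norm_triangle_ineq[of "Z k $ i $ j" "complex_of_real (\<beta> k) * ?e"]
    by (simp add: norm_mult)
  moreover have "\<beta> k * cmod ?e \<le> \<beta> k * \<rho> (Suc k)"
    using beta_pos[of k] order_trans[OF norm_entry_le_max_norm residual[of "Suc k"]] by simp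
  ultimately show ?case
    using Suc.IH by simp
qed

lemma admm_sparse_iterates_max_norm_lt_1:
  fixes L :: "complex^'t^'p" and Nm A Z :: "nat \<Rightarrow> complex^'t^'p" and \<alpha> :: real and \<beta> \<rho> :: "nat \<Rightarrow> real"
  assumes L_max: "max_norm L < 1"
    and beta_pos: "\<And>k. \<beta> k > 0"
    and N0: "Nm 0 = 0"
    and A_step: "\<And>k. A (Suc k) =
        ((1 / \<beta> k) *\<^sub>R Z k - Nm k + L) - disk_proj_mat (\<alpha> / \<beta> k) ((1 / \<beta> k) *\<^sub>R Z k - Nm k + L)"
    and Z_step: "\<And>k. Z (Suc k) = Z k - \<beta> k *\<^sub>R (Nm (Suc k) + A (Suc k) - L)"
    and rho_0: "0 \<le> \<rho> 0" and rho_decr: "\<And>r. \<rho> (Suc r) \<le> \<rho> r"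
    and residual: "\<And>r. r \<ge> 1 \<Longrightarrow> max_norm (L - Nm r - A r) \<le> \<rho> r"
    and budget: "\<And>n. max_norm (Z 0) + (\<Sum>j<n. \<beta> j * \<rho> j) < \<alpha>"
  shows "max_norm (A (Suc k)) < 1"
proof (induction k rule: nat_less_induct)
  case (1 k)
  have A_entry: "A (Suc k) $ i $ j =
      (complex_of_real (1 / \<beta> k) * Z k $ i $ j + (L - Nm k) $ i $ j)
      - disk_proj (\<alpha> / \<beta> k) (complex_of_real (1 / \<beta> k) * Z k $ i $ j + (L - Nm k) $ i $ j)" for i j
    by (simp add: A_step disk_proj_mat_def) (simp add: scaleR_conv_of_real algebra_simps)
  have "cmod (A (Suc k) $ i $ j) < 1" for i j
    unfolding A_entry
  proof (rule norm_shrinkage_residual_lt_1)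
    show "cmod ((L - Nm k) $ i $ j) < 1 + \<rho> k"
    proof (cases k)
      case 0
      then show ?thesis
        using N0 rho_0 L_max norm_entry_le_max_norm[of L i j] by simp
    next
      case (Suc k')
      have "cmod ((L - Nm k) $ i $ j) \<le> cmod ((L - Nm k - A k) $ i $ j) + cmod (A k $ i $ j)"
        using norm_triangle_ineq[of "(L - Nm k - A k) $ i $ j" "A k $ i $ j"] by simp
      moreover have "cmod ((L - Nm k - A k) $ i $ j) \<le> \<rho> k"
        using Suc order_trans[OF norm_entry_le_max_norm residual] by simp
      moreover have "cmod (A k $ i $ j) < 1"
        using Suc "1.IH" norm_entry_le_max_norm[of "A k" i j] by fastforce
      ultimately show ?thesis by simp
    qed
    have "(\<Sum>l<k. \<beta> l * \<rho> (Suc l)) \<le> (\<Sum>l<k. \<beta> l * \<rho> l)"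
      using beta_pos rho_decr by (intro sum_mono mult_left_mono) (auto intro: less_imp_le)
    then show "max_norm (Z 0) + (\<Sum>l<k. \<beta> l * \<rho> (Suc l)) + \<beta> k * \<rho> k \<le> \<alpha>"
      using budget[of "Suc k"] by simp
  qed (use beta_pos admm_dual_entry_bound[where \<beta> = \<beta> and \<rho> = \<rho>, OF beta_pos Z_step residual] in auto)
  then show ?case
    by (simp add: max_norm_less_iff)
qed

text \<open>Neither the singular value thresholding step \<open>N_step\<close> nor \<open>\<alpha> > 0\<close> is needed:
  the low-rank iterates enter only through the residual bounds.\<close>
theorem theorem7:
  fixes L :: "complex^'t^'p"
    and NN :: nat and \<alpha> :: real and pp q :: real
    and \<beta> :: "nat \<Rightarrow> real"
    and Nm A Z :: "nat \<Rightarrow> complex^'t^'p"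
  assumes L_nz: "L \<noteq> 0"
    and L_max: "max_norm L < 1"
    and alpha_pos: "\<alpha> > 0"
    and beta_def: "\<And>k. \<beta> k = min (1.5 ^ k) (1.5 ^ NN) * 1.25 / spec_norm L"
    and N0: "Nm 0 = 0"
    and Z0: "Z 0 = (1 / spec_norm L) *\<^sub>R L"
    and A_step: "\<And>k. A (Suc k) =
        ((1 / \<beta> k) *\<^sub>R Z k - Nm k + L) - disk_proj_mat (\<alpha> / \<beta> k) ((1 / \<beta> k) *\<^sub>R Z k - Nm k + L)"
    and N_step: "\<And>k. svt_of (1 / \<beta> k) (L - A (Suc k) + (1 / \<beta> k) *\<^sub>R Z k) (Nm (Suc k))"
    and Z_step: "\<And>k. Z (Suc k) = Z k - \<beta> k *\<^sub>R (Nm (Suc k) + A (Suc k) - L)"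
    and pp_pos: "pp > 0" and q_pos: "0 < q" and q_lt1: "q < 1"
    and residual: "\<And>r. r \<ge> 1 \<Longrightarrow> max_norm (L - Nm r - A r) \<le> pp * q ^ r"
    and alpha_big: "\<alpha> > max_norm L / spec_norm L
        + 1.25 * pp / spec_norm L * (\<Sum>j<NN. (1.5 * q) ^ j)
        + \<beta> NN * pp * q ^ NN / (1 - q)"
  shows "\<forall>k\<ge>1. max_norm (A k) < 1"
proof -
  have s_pos: "spec_norm L > 0"
    using L_nz by (rule spec_norm_pos)
  have beta_pos: "\<beta> k > 0" for k
    using s_pos by (simp add: beta_def)
  have Z0_le: "max_norm (Z 0) \<le> max_norm L / spec_norm L"
    using max_norm_scaleR_le[of "1 / spec_norm L" L] s_pos by (simp add: Z0)
  have weights_le: "(\<Sum>j<n. \<beta> j * (pp * q ^ j))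
      \<le> 1.25 * pp / spec_norm L * (\<Sum>j<NN. (1.5 * q) ^ j) + \<beta> NN * pp * q ^ NN / (1 - q)" for n
  proof -
    have "(\<Sum>j<n. \<beta> j * (pp * q ^ j)) = 1.25 * pp / spec_norm L * (\<Sum>j<n. min (1.5 ^ j) (1.5 ^ NN) * q ^ j)"
      by (simp add: beta_def sum_distrib_left mult_ac)
    also have "\<dots> \<le> 1.25 * pp / spec_norm L * ((\<Sum>j<NN. (1.5 * q) ^ j) + 1.5 ^ NN * q ^ NN / (1 - q))"
      using s_pos pp_pos q_pos q_lt1 by (intro mult_left_mono sum_capped_geometric_le) auto
    also have "\<dots> = 1.25 * pp / spec_norm L * (\<Sum>j<NN. (1.5 * q) ^ j) + \<beta> NN * pp * q ^ NN / (1 - q)"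
      by (simp add: beta_def distrib_left)
    finally show ?thesis .
  qed
  have budget: "max_norm (Z 0) + (\<Sum>j<n. \<beta> j * (pp * q ^ j)) < \<alpha>" for n
    using Z0_le weights_le[of n] alpha_big by linarith
  have "max_norm (A (Suc k)) < 1" for k
    by (rule admm_sparse_iterates_max_norm_lt_1[OF L_max beta_pos N0 A_step Z_step _ _ residual budget])
       (use pp_pos q_pos q_lt1 in \<open>auto simp: mult_left_mono power_decreasing\<close>)
  then show ?thesis
    by (metis One_nat_def Suc_le_D)
qed

end
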